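(* Every uniformly convex Banach space $X$ has the weak fixed point property for mappings which diminish the radius of invariant convex subsets: for every nontrivial weakly compact convex subset $K$ of $X$, every self-mapping $T:K\to K$ which diminishes the radius of invariant convex subsets of $K$ has a fixed point in $K$.
   Context: Nontrivial means containing more than one point. For $x\in X$ and $A\subseteq X$, $r_x(A)=\sup\{\|x-y\|:y\in A\}$. A mapping $T:K\to K$ diminishes the radius of invariant convex subsets of $K$ if for every convex $A\subseteq K$ with $T(A)\subseteq A$, $r_{Tx}(T(A))\le r_x(A)$ for every $x\in K$. *)

theory Defs
  imports "HOL-Analysis.Analysis"
begin

definition weak_topology :: "'a::real_normed_vector topology" where
  "weak_topology = topology_generated_by
     {{x. blinfun_apply f x \<in> U} | (f :: 'a \<Rightarrow>\<^sub>L real) U. open U}"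

definition weakly_compact :: "'a::real_normed_vector set \<Rightarrow> bool" where
  "weakly_compact K \<longleftrightarrow> compactin weak_topology K"

definition uniformly_convex :: "'a::real_normed_vector itself \<Rightarrow> bool" where
  "uniformly_convex _ \<longleftrightarrow>
     (\<forall>\<epsilon>>0. \<exists>\<delta>>0. \<forall>x y :: 'a. norm x \<le> 1 \<and> norm y \<le> 1 \<and> norm (x - y) \<ge> \<epsilon>
        \<longrightarrow> norm ((x + y) /\<^sub>R 2) \<le> 1 - \<delta>)"

definition radius_from :: "'a::real_normed_vector \<Rightarrow> 'a set \<Rightarrow> real" where
  "radius_from x A = (SUP y\<in>A. norm (x - y))"

definition diminishes_radius :: "('a::real_normed_vector \<Rightarrow> 'a) \<Rightarrow> 'a set \<Rightarrow> bool" where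
  "diminishes_radius T K \<longleftrightarrow>
     (\<forall>A. A \<subseteq> K \<and> convex A \<and> T ` A \<subseteq> A \<longrightarrow>
        (\<forall>x\<in>K. radius_from (T x) (T ` A) \<le> radius_from x A))"

end

theory Submission
  imports Defs
begin

(* Zorn's lemma and weak compactness give a minimal nonempty convex T-invariant set M \<subseteq> K
   that is weakly closed in K.  For x \<in> K the set M \<inter> cball (T x) \<rho>, where \<rho> is the radius of
   T ` M about T x, is again such a set, so minimality and the radius-diminishing hypothesis give
   r_{T x}(M) \<le> r_x(M).  The sublevel sets of x -> r_x(M) are weakly closed, so M has a
   Chebyshev centre c; then T c is a Chebyshev centre too, and in a uniformly convex space the
   Chebyshev centre of a bounded convex set is unique, so T c = c.
   Weak closedness of balls and boundedness of weakly compact sets need norming functionals;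
   these come from a Hahn-Banach argument: a minimal sublinear functional is linear. *)

section \<open>Sublinear functionals and norming functionals\<close>

text \<open>Positive homogeneity is only required as an inequality; equality follows by
scaling with \<open>1 / t\<close>.\<close>
definition sublinear :: "('a::real_vector \<Rightarrow> real) \<Rightarrow> bool" where
  "sublinear q \<longleftrightarrow> (\<forall>x y. q (x + y) \<le> q x + q y) \<and> (\<forall>t x. 0 < t \<longrightarrow> q (t *\<^sub>R x) \<le> t * q x)"

lemma sublinear_add: "sublinear q \<Longrightarrow> q (x + y) \<le> q x + q y"
  by (simp add: sublinear_def)

lemma sublinear_scaleR_pos:
  assumes "sublinear q" "0 < t"
  shows "q (t *\<^sub>R x) = t * q x"
proof -
  have "q (inverse t *\<^sub>R y) \<le> inverse t * q y" for y
    using assms by (simp add: sublinear_def)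
  from this[of "t *\<^sub>R x"] have "q x \<le> inverse t * q (t *\<^sub>R x)" using assms(2) by simp
  then have "t * q x \<le> q (t *\<^sub>R x)" using assms(2) by (simp add: field_simps)
  moreover have "q (t *\<^sub>R x) \<le> t * q x" using assms by (simp add: sublinear_def)
  ultimately show ?thesis by linarith
qed

lemma sublinear_zero: "sublinear q \<Longrightarrow> q 0 = 0"
  using sublinear_scaleR_pos[of q 2 0] by simp

lemma sublinear_scaleR: "sublinear q \<Longrightarrow> 0 \<le> t \<Longrightarrow> q (t *\<^sub>R x) = t * q x"
  by (cases "t = 0") (simp_all add: sublinear_zero sublinear_scaleR_pos)

lemma sublinear_add_minus_nonneg: "sublinear q \<Longrightarrow> 0 \<le> q x + q (- x)"
  using sublinear_add[of q x "- x"] sublinear_zero[of q] by simp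

lemma sublinear_norm: "sublinear (norm :: 'a::real_normed_vector \<Rightarrow> real)"
  by (simp add: sublinear_def norm_triangle_ineq)

text \<open>A minimal sublinear functional \<open>q\<close> coincides with \<open>lower_along q y\<close>, which forces
\<open>q (- y) = - q y\<close>; this is how minimality yields linearity.\<close>
definition lower_along :: "('a::real_vector \<Rightarrow> real) \<Rightarrow> 'a \<Rightarrow> 'a \<Rightarrow> real" where
  "lower_along q y x = (INF t\<in>{0..}. q (x + t *\<^sub>R y) - t * q y)"

lemma lower_along_le:
  assumes "sublinear q" "0 \<le> t"
  shows "lower_along q y x \<le> q (x + t *\<^sub>R y) - t * q y"
proof -
  have "- q (- x) \<le> q (x + s *\<^sub>R y) - s * q y" if "0 \<le> s" for s
    using sublinear_add[OF assms(1), of "x + s *\<^sub>R y" "- x"] sublinear_scaleR[OF assms(1) that]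
    by simp
  then have "bdd_below ((\<lambda>s. q (x + s *\<^sub>R y) - s * q y) ` {0..})"
    by (intro bdd_belowI2[where m = "- q (- x)"]) auto
  then show ?thesis
    unfolding lower_along_def using assms(2) by (intro cINF_lower) auto
qed

lemma lower_along_greatest:
  "(\<And>t. 0 \<le> t \<Longrightarrow> c \<le> q (x + t *\<^sub>R y) - t * q y) \<Longrightarrow> c \<le> lower_along q y x"
  unfolding lower_along_def by (intro cINF_greatest) auto

lemma lower_along_le_self: "sublinear q \<Longrightarrow> lower_along q y x \<le> q x"
  using lower_along_le[of q 0] by simp

lemma lower_along_minus: "sublinear q \<Longrightarrow> lower_along q y (- y) \<le> - q y"
  using lower_along_le[of q 1 y "- y"] by (simp add: sublinear_zero)

lemma sublinear_lower_along:
  assumes q: "sublinear q"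
  shows "sublinear (lower_along q y)"
  unfolding sublinear_def
proof (intro conjI allI impI)
  fix a b
  let ?p = "lower_along q y"
  have "?p (a + b) - (q (b + t' *\<^sub>R y) - t' * q y) \<le> q (a + t *\<^sub>R y) - t * q y"
    if "0 \<le> t" "0 \<le> t'" for t t'
  proof -
    have "?p (a + b) \<le> q (a + b + (t + t') *\<^sub>R y) - (t + t') * q y"
      using lower_along_le[OF q] that by simp
    also have "a + b + (t + t') *\<^sub>R y = (a + t *\<^sub>R y) + (b + t' *\<^sub>R y)"
      by (simp add: algebra_simps)
    finally show ?thesis using sublinear_add[OF q, of "a + t *\<^sub>R y" "b + t' *\<^sub>R y"] by argo
  qed
  then have "?p (a + b) - (q (b + t' *\<^sub>R y) - t' * q y) \<le> ?p a" if "0 \<le> t'" for t'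
    using that by (intro lower_along_greatest)
  then have "?p (a + b) - ?p a \<le> ?p b"
    by (intro lower_along_greatest) (simp add: algebra_simps)
  then show "?p (a + b) \<le> ?p a + ?p b" by simp
next
  fix s :: real and x assume s: "0 < s"
  have "lower_along q y (s *\<^sub>R x) \<le> s * (q (x + t *\<^sub>R y) - t * q y)" if "0 \<le> t" for t
  proof -
    have "lower_along q y (s *\<^sub>R x) \<le> q (s *\<^sub>R x + (s * t) *\<^sub>R y) - (s * t) * q y"
      using lower_along_le[OF q] that s by simp
    also have "s *\<^sub>R x + (s * t) *\<^sub>R y = s *\<^sub>R (x + t *\<^sub>R y)"
      by (simp add: scaleR_add_right)
    also have "q (s *\<^sub>R (x + t *\<^sub>R y)) = s * q (x + t *\<^sub>R y)"
      by (rule sublinear_scaleR_pos[OF q s])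
    finally show ?thesis by (simp add: right_diff_distrib)
  qed
  then have "lower_along q y (s *\<^sub>R x) / s \<le> lower_along q y x"
    using s by (intro lower_along_greatest) (simp add: divide_le_eq mult.commute)
  then show "lower_along q y (s *\<^sub>R x) \<le> s * lower_along q y x"
    using s by (simp add: divide_le_eq mult.commute)
qed

lemma sublinear_Inf_chain:
  fixes C :: "('a::real_vector \<Rightarrow> real) set"
  assumes "C \<noteq> {}" and sub: "\<And>q. q \<in> C \<Longrightarrow> sublinear q \<and> q \<le> p" and "sublinear p"
    and chain: "\<And>q q'. q \<in> C \<Longrightarrow> q' \<in> C \<Longrightarrow> q \<le> q' \<or> q' \<le> q"
  shows "sublinear (\<lambda>x. INF q\<in>C. q x)" and "\<And>q x. q \<in> C \<Longrightarrow> (INF q\<in>C. q x) \<le> q x"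
proof -
  let ?g = "\<lambda>x. INF q\<in>C. q x"
  have "- p (- x) \<le> q x" if "q \<in> C" for q x
  proof -
    have "q (- x) \<le> p (- x)" using sub[OF that] by (simp add: le_fun_def)
    then show ?thesis using sublinear_add_minus_nonneg[of q x] sub[OF that] by simp
  qed
  then have "bdd_below ((\<lambda>q. q x) ` C)" for x
    by (intro bdd_belowI2[where m = "- p (- x)"])
  then show le: "?g x \<le> q x" if "q \<in> C" for q x
    using that by (intro cINF_lower)
  have greatest: "c \<le> ?g x" if "\<And>q. q \<in> C \<Longrightarrow> c \<le> q x" for c x
    using that \<open>C \<noteq> {}\<close> by (intro cINF_greatest)
  show "sublinear ?g"
    unfolding sublinear_def
  proof (intro conjI allI impI)
    fix a b
    have "?g (a + b) \<le> q a + q' b" if "q \<in> C" "q' \<in> C" for q q'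
      using chain[OF that]
    proof
      assume "q \<le> q'"
      have "q (a + b) \<le> q a + q b" using sub[OF that(1)] sublinear_add by blast
      then have "?g (a + b) \<le> q a + q b" using le[OF that(1), of "a + b"] by linarith
      then show ?thesis using \<open>q \<le> q'\<close> by (auto simp: le_fun_def intro: order_trans)
    next
      assume "q' \<le> q"
      have "q' (a + b) \<le> q' a + q' b" using sub[OF that(2)] sublinear_add by blast
      then have "?g (a + b) \<le> q' a + q' b" using le[OF that(2), of "a + b"] by linarith
      then show ?thesis using \<open>q' \<le> q\<close> by (auto simp: le_fun_def intro: order_trans)
    qed
    then have "?g (a + b) - q' b \<le> ?g a" if "q' \<in> C" for q'
      using that by (intro greatest) force
    then have "?g (a + b) - ?g a \<le> ?g b" by (intro greatest) force
    then show "?g (a + b) \<le> ?g a + ?g b" by simp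
  next
    fix t :: real and x assume t: "0 < t"
    have "?g (t *\<^sub>R x) / t \<le> q x" if "q \<in> C" for q
      using le[OF that, of "t *\<^sub>R x"] sublinear_scaleR_pos[of q t x] sub[OF that] t
      by (simp add: divide_le_eq mult.commute)
    then have "?g (t *\<^sub>R x) / t \<le> ?g x" by (intro greatest)
    then show "?g (t *\<^sub>R x) \<le> t * ?g x" using t by (simp add: divide_le_eq mult.commute)
  qed
qed

lemma minimal_sublinear_linear:
  assumes m: "sublinear m" and minimal: "\<And>q. sublinear q \<Longrightarrow> q \<le> m \<Longrightarrow> q = m"
  shows "linear m"
proof -
  have odd: "m (- y) = - m y" for y
  proof -
    have "lower_along m y = m"
      using minimal[OF sublinear_lower_along[OF m]] lower_along_le_self[OF m] by (simp add: le_fun_def)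
    then have "m (- y) \<le> - m y" using lower_along_minus[OF m, of y] by simp
    then show ?thesis using sublinear_add_minus_nonneg[OF m, of y] by linarith
  qed
  have add: "m (a + b) = m a + m b" for a b
    using sublinear_add[OF m, of a b] sublinear_add[OF m, of "a + b" "- b"] odd[of b] by simp
  have scale: "m (r *\<^sub>R b) = r *\<^sub>R m b" for r b
  proof (cases "0 \<le> r")
    case True then show ?thesis using sublinear_scaleR[OF m] by simp
  next
    case False
    then have "m (- ((- r) *\<^sub>R b)) = - ((- r) * m b)" using odd sublinear_scaleR[OF m, of "- r"] by simp
    then show ?thesis by simp
  qed
  show ?thesis by (rule linearI[OF add scale])
qed

lemma exists_minimal_sublinear_below:
  fixes p :: "'a::real_vector \<Rightarrow> real"
  assumes "sublinear p"
  obtains m where "sublinear m" "m \<le> p" "\<And>q. sublinear q \<Longrightarrow> q \<le> m \<Longrightarrow> q = m"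
proof -
  define S where "S = {q. sublinear q \<and> q \<le> p}"
  define P where "P = (\<lambda>q q' :: 'a \<Rightarrow> real. q' \<le> q)"
  have "partial_order_on S (relation_of P S)"
    by (rule partial_order_on_relation_ofI) (auto simp: P_def)
  then have "\<exists>m\<in>S. \<forall>q\<in>S. P m q \<longrightarrow> q = m"
  proof (rule predicate_Zorn)
    fix C assume C: "C \<in> Chains (relation_of P S)"
    show "\<exists>u\<in>S. \<forall>q\<in>C. P q u"
    proof (cases "C = {}")
      case True then show ?thesis using assms by (auto simp: S_def)
    next
      case False
      have sub: "sublinear q \<and> q \<le> p" if "q \<in> C" for q
        using Chains_relation_of[OF C] that by (auto simp: S_def)
      have chain: "q \<le> q' \<or> q' \<le> q" if "q \<in> C" "q' \<in> C" for q q'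
        using C that unfolding Chains_def relation_of_def P_def by blast
      let ?g = "\<lambda>x. INF q\<in>C. q x"
      have "sublinear ?g" and le: "\<And>q. q \<in> C \<Longrightarrow> ?g \<le> q"
        using sublinear_Inf_chain[OF False sub assms chain] by (auto simp: le_fun_def)
      moreover obtain q where "q \<in> C" using False by blast
      ultimately have "?g \<in> S" using sub by (auto simp: S_def intro: order_trans)
      then show ?thesis using le by (auto simp: P_def)
    qed
  qed
  then show ?thesis using that by (auto simp: S_def P_def)
qed

text \<open>Minimising below \<open>lower_along norm x\<^sub>0\<close> rather than below the norm itself is what
makes the resulting linear functional attain the norm at \<open>x\<^sub>0\<close>.\<close>
lemma exists_norming_linear_functional:
  fixes x\<^sub>0 :: "'a::real_normed_vector"
  obtains g where "linear g" "\<And>x. g x \<le> norm x" "g x\<^sub>0 = norm x\<^sub>0"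
proof -
  let ?p = "lower_along norm x\<^sub>0"
  obtain m where m: "sublinear m" "m \<le> ?p" and minimal: "\<And>q. sublinear q \<Longrightarrow> q \<le> m \<Longrightarrow> q = m"
    using exists_minimal_sublinear_below[OF sublinear_lower_along[OF sublinear_norm]] by blast
  have lin: "linear m" using minimal_sublinear_linear[OF m(1) minimal] by blast
  have le_norm: "m x \<le> norm x" for x
    using m(2) lower_along_le_self[OF sublinear_norm, of x\<^sub>0 x] by (auto simp: le_fun_def intro: order_trans)
  have "m (- x\<^sub>0) \<le> - norm x\<^sub>0"
    using m(2) lower_along_minus[OF sublinear_norm, of x\<^sub>0] by (auto simp: le_fun_def intro: order_trans)
  then have "m x\<^sub>0 = norm x\<^sub>0" using le_norm[of x\<^sub>0] linear_neg[OF lin, of x\<^sub>0] by simp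
  then show ?thesis using that lin le_norm by blast
qed

lemma exists_norming_blinfun:
  fixes x :: "'a::real_normed_vector"
  obtains f :: "'a \<Rightarrow>\<^sub>L real" where "norm f \<le> 1" "f x = norm x"
proof -
  obtain g where lin: "linear g" and le: "\<And>y. g y \<le> norm y" and gx: "g x = norm x"
    using exists_norming_linear_functional[of x] by blast
  have abs_le: "\<bar>g y\<bar> \<le> norm y" for y
    using le[of y] le[of "- y"] linear_neg[OF lin, of y] by simp
  have bl: "bounded_linear g"
    using lin abs_le by (intro bounded_linear_intro[of g 1]) (auto simp: linear_add linear_scale)
  have "norm (Blinfun g) \<le> 1"
    using abs_le by (intro norm_blinfun_bound) (auto simp: bounded_linear_Blinfun_apply[OF bl])
  then show ?thesis using that[of "Blinfun g"] gx by (simp add: bounded_linear_Blinfun_apply[OF bl])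
qed

section \<open>The weak topology\<close>

lemma topspace_weak_topology [simp]: "topspace (weak_topology :: 'a::real_normed_vector topology) = UNIV"
proof -
  have "UNIV \<in> {{x. blinfun_apply f x \<in> U} | (f :: 'a \<Rightarrow>\<^sub>L real) U. open U}"
    by blast
  then show ?thesis unfolding weak_topology_def by auto
qed

lemma openin_weak_topology_vimage:
  fixes f :: "'a::real_normed_vector \<Rightarrow>\<^sub>L real"
  shows "open U \<Longrightarrow> openin weak_topology {x. f x \<in> U}"
  unfolding weak_topology_def by (rule topology_generated_by_Basis) blast

lemma continuous_map_weak_topology_blinfun:
  fixes f :: "'a::real_normed_vector \<Rightarrow>\<^sub>L real"
  shows "continuous_map weak_topology euclidean (blinfun_apply f)"
  unfolding continuous_map_def using openin_weak_topology_vimage by auto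

lemma closedin_weak_topology_cball:
  fixes p :: "'a::real_normed_vector"
  shows "closedin weak_topology (cball p r)"
proof -
  have "\<exists>V. openin weak_topology V \<and> x \<in> V \<and> V \<subseteq> - cball p r" if x: "x \<notin> cball p r" for x
  proof -
    obtain f :: "'a \<Rightarrow>\<^sub>L real" where f: "norm f \<le> 1" "f (x - p) = norm (x - p)"
      using exists_norming_blinfun by blast
    have f_le: "f y \<le> norm y" for y
      using norm_blinfun[of f y] f(1) mult_right_mono[OF f(1) norm_ge_zero[of y]] by auto
    define V where "V = {y. f y \<in> {f p + r<..}}"
    have "openin weak_topology V" unfolding V_def by (rule openin_weak_topology_vimage) simp
    moreover have "x \<in> V" using f(2) x by (simp add: V_def blinfun.diff_right dist_norm norm_minus_commute)
    moreover have "V \<subseteq> - cball p r"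
    proof
      fix y assume "y \<in> V"
      then have "r < f (y - p)" by (simp add: V_def blinfun.diff_right)
      also have "\<dots> \<le> norm (y - p)" by (rule f_le)
      finally show "y \<in> - cball p r" by (simp add: dist_norm norm_minus_commute)
    qed
    ultimately show ?thesis by blast
  qed
  then show ?thesis
    unfolding closedin_def by (simp add: openin_subopen[of _ "- cball p r"] Compl_eq_Diff_UNIV[symmetric])
qed

text \<open>Uniform boundedness on the Banach space of functionals: evaluation at the points
of \<open>K\<close> is pointwise bounded, so by Baire some ball of functionals is uniformly bounded on
\<open>K\<close>, and norming functionals turn this into a bound on the norms.\<close>
lemma weakly_bounded_imp_bounded:
  fixes K :: "'a::real_normed_vector set"
  assumes "\<And>f::'a \<Rightarrow>\<^sub>L real. bounded (blinfun_apply f ` K)"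
  shows "bounded K"
proof -
  define E where "E n = {f :: 'a \<Rightarrow>\<^sub>L real. \<forall>x\<in>K. \<bar>f x\<bar> \<le> real n}" for n :: nat
  have "closed (E n)" for n
  proof -
    have "E n = (\<Inter>x\<in>K. {f. \<bar>blinfun_apply f x\<bar> \<le> real n})" by (auto simp: E_def)
    then show ?thesis by (auto intro!: closed_Collect_le continuous_intros)
  qed
  have "f \<in> \<Union>(range E)" for f
  proof -
    obtain B where "\<And>x. x \<in> K \<Longrightarrow> \<bar>f x\<bar> \<le> B" using assms[of f] by (auto simp: bounded_iff)
    moreover obtain n :: nat where "B \<le> real n" using real_arch_simple by blast
    ultimately have "f \<in> E n" by (force simp: E_def)
    then show ?thesis by blast
  qed
  then have "\<Union>(range E) = UNIV" by blast
  then have "\<not> (\<forall>T\<in>range E. closed T \<and> interior T = {})"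
    using Baire_category_alt[of euclidean "range E"] by (force simp: completely_metrizable_space_euclidean)
  then obtain n where "interior (E n) \<noteq> {}" using \<open>\<And>n. closed (E n)\<close> by auto
  then obtain f\<^sub>0 e where e: "0 < e" and ball: "ball f\<^sub>0 e \<subseteq> E n"
    by (meson all_not_in_conv mem_interior)
  then have "f\<^sub>0 \<in> E n" by auto
  have "norm x \<le> 4 * real n / e" if x: "x \<in> K" for x
  proof -
    obtain g :: "'a \<Rightarrow>\<^sub>L real" where g: "norm g \<le> 1" "g x = norm x"
      using exists_norming_blinfun by blast
    have "dist f\<^sub>0 (f\<^sub>0 + (e/2) *\<^sub>R g) < e" using g(1) e by (simp add: dist_norm)
    then have "f\<^sub>0 + (e/2) *\<^sub>R g \<in> E n" using ball by auto
    then have "\<bar>(f\<^sub>0 + (e/2) *\<^sub>R g) x\<bar> \<le> real n" using x by (simp add: E_def)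
    then have "\<bar>f\<^sub>0 x + (e/2) * norm x\<bar> \<le> real n"
      by (simp add: g(2)[symmetric] blinfun.add_left blinfun.scaleR_left)
    moreover have "\<bar>f\<^sub>0 x\<bar> \<le> real n" using \<open>f\<^sub>0 \<in> E n\<close> x by (simp add: E_def)
    ultimately have "(e/2) * norm x \<le> 2 * real n" by linarith
    then show ?thesis using e by (simp add: field_simps)
  qed
  then show ?thesis by (auto simp: bounded_iff)
qed

lemma weakly_compact_imp_bounded:
  assumes "weakly_compact K"
  shows "bounded K"
proof (rule weakly_bounded_imp_bounded)
  fix f :: "'a \<Rightarrow>\<^sub>L real"
  have "compactin euclidean (blinfun_apply f ` K)"
    using assms unfolding weakly_compact_def
    by (rule image_compactin[OF _ continuous_map_weak_topology_blinfun])
  then show "bounded (blinfun_apply f ` K)" by (simp add: compact_imp_bounded)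
qed

section \<open>Radii, Chebyshev centres and minimal invariant sets\<close>

lemma radius_from_ge:
  assumes "bounded A" "y \<in> A"
  shows "norm (x - y) \<le> radius_from x A"
proof -
  obtain B where "\<And>z. z \<in> A \<Longrightarrow> norm z \<le> B" using assms(1) by (auto simp: bounded_iff)
  then have "norm (x - z) \<le> norm x + B" if "z \<in> A" for z
    using norm_triangle_ineq4[of x z] that by fastforce
  then have "bdd_above ((\<lambda>z. norm (x - z)) ` A)" by (intro bdd_aboveI2)
  then show ?thesis unfolding radius_from_def using assms(2) by (rule cSUP_upper2) simp
qed

lemma radius_from_le: "A \<noteq> {} \<Longrightarrow> (\<And>y. y \<in> A \<Longrightarrow> norm (x - y) \<le> r) \<Longrightarrow> radius_from x A \<le> r"
  unfolding radius_from_def by (rule cSUP_least)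

lemma radius_from_le_iff:
  "bounded A \<Longrightarrow> A \<noteq> {} \<Longrightarrow> radius_from x A \<le> r \<longleftrightarrow> (\<forall>y\<in>A. norm (x - y) \<le> r)"
  using radius_from_ge[of A _ x] by (auto intro: radius_from_le order_trans)

lemma compactin_Inter_chain_nonempty:
  assumes "compactin X K" "\<C> \<noteq> {}"
    and closed: "\<And>C. C \<in> \<C> \<Longrightarrow> closedin X C \<and> C \<subseteq> K \<and> C \<noteq> {}"
    and chain: "\<And>C D. C \<in> \<C> \<Longrightarrow> D \<in> \<C> \<Longrightarrow> C \<subseteq> D \<or> D \<subseteq> C"
  shows "\<Inter>\<C> \<noteq> {}"
proof -
  have fip: "K \<inter> \<Inter>\<U> \<noteq> {}"
    if "\<forall>C\<in>\<U>. closedin X C" "\<forall>\<F>. finite \<F> \<and> \<F> \<subseteq> \<U> \<longrightarrow> K \<inter> \<Inter>\<F> \<noteq> {}" for \<U>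
    using assms(1) that unfolding compactin_fip by blast
  have "K \<inter> \<Inter>\<F> \<noteq> {}" if "finite \<F>" "\<F> \<subseteq> \<C>" for \<F>
  proof (cases "\<F> = {}")
    case True
    then show ?thesis using assms(2) closed by auto
  next
    case False
    have "subset.chain UNIV \<F>" using that(2) chain by (auto simp: subset_chain_def)
    then have "\<Inter>\<F> \<in> \<F>" using Inter_in_chain[OF that(1) False] by blast
    then show ?thesis using closed that(2) by blast
  qed
  then have "K \<inter> \<Inter>\<C> \<noteq> {}" using closed by (intro fip) auto
  then show ?thesis by blast
qed

definition nonempty_closed_convex_invariant :: "'a::real_vector topology \<Rightarrow> ('a \<Rightarrow> 'a) \<Rightarrow> 'a set \<Rightarrow> bool" where
  "nonempty_closed_convex_invariant X T A \<longleftrightarrow> A \<noteq> {} \<and> closedin X A \<and> convex A \<and> T ` A \<subseteq> A"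

lemma exists_minimal_closed_convex_invariant:
  assumes "compactin X K" "nonempty_closed_convex_invariant X T K"
  obtains M where "M \<subseteq> K" "nonempty_closed_convex_invariant X T M"
    "\<And>A. A \<subseteq> M \<Longrightarrow> nonempty_closed_convex_invariant X T A \<Longrightarrow> A = M"
proof -
  define F where "F = {A. A \<subseteq> K \<and> nonempty_closed_convex_invariant X T A}"
  define P where "P = (\<lambda>A B :: 'a set. B \<subseteq> A)"
  have "partial_order_on F (relation_of P F)"
    by (rule partial_order_on_relation_ofI) (auto simp: P_def)
  then have "\<exists>M\<in>F. \<forall>A\<in>F. P M A \<longrightarrow> A = M"
  proof (rule predicate_Zorn)
    fix C assume C: "C \<in> Chains (relation_of P F)"
    show "\<exists>U\<in>F. \<forall>A\<in>C. P A U"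
    proof (cases "C = {}")
      case True then show ?thesis using assms(2) by (auto simp: F_def)
    next
      case False
      have CF: "\<And>A. A \<in> C \<Longrightarrow> A \<subseteq> K \<and> nonempty_closed_convex_invariant X T A"
        using Chains_relation_of[OF C] by (auto simp: F_def)
      have chain: "A \<subseteq> B \<or> B \<subseteq> A" if "A \<in> C" "B \<in> C" for A B
        using C that unfolding Chains_def relation_of_def P_def by blast
      have "\<Inter>C \<noteq> {}"
        using CF chain by (intro compactin_Inter_chain_nonempty[OF assms(1) False])
          (auto simp: nonempty_closed_convex_invariant_def)
      moreover have "closedin X (\<Inter>C)" "convex (\<Inter>C)" "\<Inter>C \<subseteq> K"
        using CF False by (auto simp: nonempty_closed_convex_invariant_def intro!: convex_Inter)
      moreover have "T ` \<Inter>C \<subseteq> \<Inter>C"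
        using CF by (fastforce simp: nonempty_closed_convex_invariant_def image_subset_iff)
      ultimately have "\<Inter>C \<in> F" by (simp add: F_def nonempty_closed_convex_invariant_def)
      then show ?thesis by (auto simp: P_def)
    qed
  qed
  then show ?thesis using that by (auto simp: F_def P_def)
qed

lemma weakly_compact_chebyshev_center:
  assumes "weakly_compact M" "M \<noteq> {}"
  obtains c where "c \<in> M" "\<And>x. x \<in> M \<Longrightarrow> radius_from c M \<le> radius_from x M"
proof -
  have bounded: "bounded M" using weakly_compact_imp_bounded[OF assms(1)] .
  define s where "s = (INF x\<in>M. radius_from x M)"
  have "0 \<le> radius_from x M" for x
  proof -
    obtain y where "y \<in> M" using assms(2) by blast
    then show ?thesis using radius_from_ge[OF bounded, of y x] norm_ge_zero[of "x - y"] by linarith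
  qed
  then have bdd: "bdd_below ((\<lambda>x. radius_from x M) ` M)" by (intro bdd_belowI2)
  define S where "S e = {x \<in> M. radius_from x M \<le> s + e}" for e :: real
  have closed: "closedin (subtopology weak_topology M) (S e)" for e
  proof -
    have "S e = (\<Inter>y\<in>M. cball y (s + e)) \<inter> M"
      using radius_from_le_iff[OF bounded assms(2)] by (auto simp: S_def dist_norm norm_minus_commute)
    moreover have "closedin weak_topology (\<Inter>y\<in>M. cball y (s + e))"
      using assms(2) closedin_weak_topology_cball by (intro closedin_Inter) auto
    ultimately show ?thesis unfolding closedin_subtopology by blast
  qed
  have nonempty: "S e \<noteq> {}" if "0 < e" for e
  proof -
    have "(INF x\<in>M. radius_from x M) < s + e" using that by (simp add: s_def)
    then obtain x where "x \<in> M" "radius_from x M < s + e"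
      using cInf_lessD[of "(\<lambda>x. radius_from x M) ` M"] assms(2) by blast
    then show ?thesis by (auto simp: S_def)
  qed
  have S_subset: "S e \<subseteq> M" for e
    by (simp add: S_def)
  have mono: "S e \<subseteq> S e'" if "e \<le> e'" for e e'
    using that by (auto simp: S_def)
  have "compactin (subtopology weak_topology M) M"
    using assms(1) by (simp add: weakly_compact_def compactin_subtopology)
  then have "\<Inter>(S ` {0<..}) \<noteq> {}"
  proof (rule compactin_Inter_chain_nonempty)
    show "closedin (subtopology weak_topology M) C \<and> C \<subseteq> M \<and> C \<noteq> {}" if "C \<in> S ` {0<..}" for C
      using that closed nonempty S_subset by blast
    show "C \<subseteq> D \<or> D \<subseteq> C" if C: "C \<in> S ` {0<..}" and D: "D \<in> S ` {0<..}" for C D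
    proof -
      obtain e e' where "C = S e" "D = S e'" using C D by blast
      then show ?thesis using mono[of e e'] mono[of e' e] by (cases "e \<le> e'") auto
    qed
  qed auto
  then obtain c where c: "\<And>e. 0 < e \<Longrightarrow> c \<in> S e" by blast
  show ?thesis
  proof (rule that)
    show "c \<in> M" using c[of 1] by (simp add: S_def)
    have "radius_from c M \<le> s + e" if "0 < e" for e
      using c[OF that] by (simp add: S_def)
    then have "radius_from c M \<le> s" by (rule field_le_epsilon)
    moreover have "s \<le> radius_from x M" if "x \<in> M" for x
      unfolding s_def using bdd that by (rule cINF_lower)
    ultimately show "radius_from c M \<le> radius_from x M" if "x \<in> M" for x
      using that by (meson order_trans)
  qed
qed

lemma uniformly_convex_midpoint_dist:
  fixes c c' :: "'a::real_normed_vector"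
  assumes "uniformly_convex TYPE('a)" "0 < r" "c \<noteq> c'"
  obtains \<delta> where "0 < \<delta>"
    "\<And>z. norm (c - z) \<le> r \<Longrightarrow> norm (c' - z) \<le> r \<Longrightarrow> norm (midpoint c c' - z) \<le> (1 - \<delta>) * r"
proof -
  have "0 < norm (c - c') / r" using assms(2,3) by simp
  then obtain \<delta> where "0 < \<delta>" and \<delta>: "\<forall>u v :: 'a. norm u \<le> 1 \<and> norm v \<le> 1 \<and>
      norm (u - v) \<ge> norm (c - c') / r \<longrightarrow> norm ((u + v) /\<^sub>R 2) \<le> 1 - \<delta>"
    using assms(1) unfolding uniformly_convex_def by auto
  have "norm (midpoint c c' - z) \<le> (1 - \<delta>) * r"
    if "norm (c - z) \<le> r" "norm (c' - z) \<le> r" for z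
  proof -
    define u where "u = (1 / r) *\<^sub>R (c - z)"
    define v where "v = (1 / r) *\<^sub>R (c' - z)"
    have u: "norm u \<le> 1" using that(1) assms(2) by (simp add: u_def divide_le_eq)
    have v: "norm v \<le> 1" using that(2) assms(2) by (simp add: v_def divide_le_eq)
    have "u - v = (1 / r) *\<^sub>R (c - c')" by (simp add: u_def v_def flip: scaleR_diff_right)
    then have "norm (u - v) = norm (c - c') / r" using assms(2) by simp
    then have uv: "norm ((u + v) /\<^sub>R 2) \<le> 1 - \<delta>" using \<delta> u v by simp
    have "(u + v) /\<^sub>R 2 = (1 / r) *\<^sub>R ((c - z + (c' - z)) /\<^sub>R 2)"
      by (simp add: u_def v_def flip: scaleR_add_right)
    also have "(c - z + (c' - z)) /\<^sub>R 2 = midpoint c c' - z"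
      unfolding midpoint_def by (simp add: algebra_simps flip: scaleR_2)
    finally have "norm ((1 / r) *\<^sub>R (midpoint c c' - z)) \<le> 1 - \<delta>" using uv by simp
    then show ?thesis using assms(2) by (simp add: divide_le_eq mult.commute)
  qed
  then show ?thesis using that \<open>0 < \<delta>\<close> by blast
qed

lemma uniformly_convex_chebyshev_center_unique:
  fixes M :: "'a::real_normed_vector set"
  assumes "uniformly_convex TYPE('a)" "convex M" "bounded M" "c \<in> M" "c' \<in> M"
    and center: "\<And>x. x \<in> M \<Longrightarrow> radius_from c M \<le> radius_from x M"
    and "radius_from c' M \<le> radius_from c M"
  shows "c' = c"
proof (rule ccontr)
  assume "c' \<noteq> c"
  define r where "r = radius_from c M"
  have "0 < norm (c - c')" using \<open>c' \<noteq> c\<close> by simp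
  also have "\<dots> \<le> r" unfolding r_def using radius_from_ge[OF assms(3,5)] .
  finally have "0 < r" .
  obtain \<delta> where "0 < \<delta>" and \<delta>: "\<And>z. norm (c - z) \<le> r \<Longrightarrow> norm (c' - z) \<le> r \<Longrightarrow>
      norm (midpoint c c' - z) \<le> (1 - \<delta>) * r"
    using uniformly_convex_midpoint_dist[OF assms(1) \<open>0 < r\<close>, of c c'] \<open>c' \<noteq> c\<close> by auto
  have "midpoint c c' \<in> M"
    using assms(2,4,5) midpoint_in_closed_segment convex_contains_segment by blast
  moreover have "radius_from (midpoint c c') M \<le> (1 - \<delta>) * r"
  proof (rule radius_from_le)
    show "M \<noteq> {}" using assms(4) by blast
    fix z assume "z \<in> M"
    then have "norm (c - z) \<le> r" "norm (c' - z) \<le> radius_from c' M"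
      using radius_from_ge[OF assms(3)] unfolding r_def by blast+
    moreover have "radius_from c' M \<le> r" unfolding r_def by (rule assms(7))
    ultimately have "norm (c - z) \<le> r" "norm (c' - z) \<le> r" by linarith+
    then show "norm (midpoint c c' - z) \<le> (1 - \<delta>) * r" by (rule \<delta>)
  qed
  ultimately have "r \<le> (1 - \<delta>) * r" using center[of "midpoint c c'"] unfolding r_def by linarith
  moreover have "0 < \<delta> * r" using \<open>0 < r\<close> \<open>0 < \<delta>\<close> by simp
  ultimately show False by (simp add: algebra_simps)
qed

lemma minimal_invariant_radius_from_le:
  fixes K :: "'a::real_normed_vector set"
  defines "X \<equiv> subtopology weak_topology K"
  assumes "diminishes_radius T K" "bounded K" "M \<subseteq> K"
    and M: "nonempty_closed_convex_invariant X T M"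
    and minimal: "\<And>A. A \<subseteq> M \<Longrightarrow> nonempty_closed_convex_invariant X T A \<Longrightarrow> A = M"
    and "x \<in> K"
  shows "radius_from (T x) M \<le> radius_from x M"
proof -
  have "M \<noteq> {}" "closedin X M" "convex M" "T ` M \<subseteq> M"
    using M by (auto simp: nonempty_closed_convex_invariant_def)
  define \<rho> where "\<rho> = radius_from (T x) (T ` M)"
  have "\<rho> \<le> radius_from x M"
    using assms(2) \<open>M \<subseteq> K\<close> \<open>convex M\<close> \<open>T ` M \<subseteq> M\<close> \<open>x \<in> K\<close>
    unfolding diminishes_radius_def \<rho>_def by blast
  define B where "B = M \<inter> cball (T x) \<rho>"
  have "bounded (T ` M)" using \<open>T ` M \<subseteq> M\<close> \<open>M \<subseteq> K\<close> assms(3) by (meson bounded_subset order_trans)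
  then have "T ` M \<subseteq> B"
    using \<open>T ` M \<subseteq> M\<close> radius_from_ge[of "T ` M" _ "T x"] by (auto simp: B_def \<rho>_def dist_norm)
  have "closedin X (cball (T x) \<rho> \<inter> K)"
    unfolding X_def closedin_subtopology using closedin_weak_topology_cball by blast
  then have "closedin X (M \<inter> (cball (T x) \<rho> \<inter> K))" using \<open>closedin X M\<close> by (rule closedin_Int[rotated])
  moreover have "M \<inter> (cball (T x) \<rho> \<inter> K) = B" using \<open>M \<subseteq> K\<close> by (auto simp: B_def)
  ultimately have "nonempty_closed_convex_invariant X T B"
    using \<open>T ` M \<subseteq> B\<close> \<open>M \<noteq> {}\<close> \<open>convex M\<close>
    by (auto simp: nonempty_closed_convex_invariant_def B_def intro!: convex_Int)
  then have "B = M" using minimal by (simp add: B_def)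
  then have "radius_from (T x) M \<le> \<rho>"
    using \<open>M \<noteq> {}\<close> by (intro radius_from_le) (auto simp: B_def dist_norm)
  then show ?thesis using \<open>\<rho> \<le> radius_from x M\<close> by linarith
qed

theorem corollary3p1:
  fixes K :: "'a::banach set" and T :: "'a \<Rightarrow> 'a"
  assumes "uniformly_convex TYPE('a)"
    and "weakly_compact K" and "convex K"
    and "\<exists>x\<in>K. \<exists>y\<in>K. x \<noteq> y"
    and "T ` K \<subseteq> K"
    and "diminishes_radius T K"
  shows "\<exists>x\<in>K. T x = x"
proof -
  let ?X = "subtopology weak_topology K"
  have "compactin ?X K" using assms(2) by (simp add: weakly_compact_def compactin_subtopology)
  moreover have "nonempty_closed_convex_invariant ?X T K"
    using assms(3-5) by (auto simp: nonempty_closed_convex_invariant_def)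
  ultimately obtain M where "M \<subseteq> K" and M: "nonempty_closed_convex_invariant ?X T M"
    and minimal: "\<And>A. A \<subseteq> M \<Longrightarrow> nonempty_closed_convex_invariant ?X T A \<Longrightarrow> A = M"
    by (rule exists_minimal_closed_convex_invariant) blast
  have "weakly_compact M"
    using closed_compactin[OF \<open>compactin ?X K\<close> \<open>M \<subseteq> K\<close>] M
    by (simp add: nonempty_closed_convex_invariant_def weakly_compact_def compactin_subtopology)
  then obtain c where "c \<in> M" and center: "\<And>x. x \<in> M \<Longrightarrow> radius_from c M \<le> radius_from x M"
    using M weakly_compact_chebyshev_center by (auto simp: nonempty_closed_convex_invariant_def)
  have "bounded K" using weakly_compact_imp_bounded[OF assms(2)] .
  have "radius_from (T c) M \<le> radius_from c M"
    using minimal_invariant_radius_from_le[OF assms(6) \<open>bounded K\<close> \<open>M \<subseteq> K\<close> M minimal]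
      \<open>c \<in> M\<close> \<open>M \<subseteq> K\<close> by blast
  moreover have "T c \<in> M" "convex M" using M \<open>c \<in> M\<close> by (auto simp: nonempty_closed_convex_invariant_def)
  ultimately have "T c = c"
    using uniformly_convex_chebyshev_center_unique[OF assms(1)] \<open>c \<in> M\<close> center
      bounded_subset[OF \<open>bounded K\<close> \<open>M \<subseteq> K\<close>] by blast
  then show ?thesis using \<open>c \<in> M\<close> \<open>M \<subseteq> K\<close> by blast
qed

end
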